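(* Let $\mathbf{U}$ be the $6\times 6$ matrix $$\mathbf{U}=\begin{pmatrix} 0 & -3 & 1 & -1 & -1 & -1 \\ 1 & 0 & -3 & -1 & -1 & -1 \\ -3 & 1 & 0 & -1 & -1 & -1 \\ -4 & -4 & 3 & 0 & -5 & 1 \\ -1 & -1 & -3 & 1 & 0 & -5 \\ -1 & -1 & -3 & -5 & 1 & 0 \end{pmatrix}$$ and consider the symmetric two-player game in which the row player's payoff matrix is $\mathbf{U}$ and the column player's payoff matrix is $\mathbf{U}^T$. This game has a unique Nash equilibrium (symmetric or not), namely $(\mathbf{n}_{123},\mathbf{n}_{123})$ with $\mathbf{n}_{123}=(1/3,1/3,1/3,0,0,0)$.
   Context: In the symmetric game, a mixed strategy is an element of the simplex $S_6=\{\mathbf{x}\in\mathbb{R}_+^6:\sum_i x_i=1\}$; when the row player plays $\mathbf{x}$ and the column player plays $\mathbf{y}$, the row player gets $\mathbf{x}\cdot\mathbf{U}\mathbf{y}$ and the column player gets $\mathbf{y}\cdot\mathbf{U}\mathbf{x}$. A Nash equilibrium is a pair $(\mathbf{x},\mathbf{y})$ of mixed strategies, each a best reply to the other. *)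

theory Defs
  imports Complex_Main
begin

text \<open>Pure strategies are indexed 0..5 (paper's 1..6).
  Mixed strategies: vectors x :: nat \<Rightarrow> real, only entries i < 6 matter.
  Two strategies are identified when they agree on {0..<6}.\<close>

definition U :: "nat \<Rightarrow> nat \<Rightarrow> real" where
  "U i j = [[ 0, -3,  1, -1, -1, -1],
            [ 1,  0, -3, -1, -1, -1],
            [-3,  1,  0, -1, -1, -1],
            [-4, -4,  3,  0, -5,  1],
            [-1, -1, -3,  1,  0, -5],
            [-1, -1, -3, -5,  1,  0]] ! i ! j"

definition simplex6 :: "(nat \<Rightarrow> real) set" where
  "simplex6 = {x. (\<forall>i<6. 0 \<le> x i) \<and> (\<Sum>i<6. x i) = 1}"

definition bil :: "(nat \<Rightarrow> nat \<Rightarrow> real) \<Rightarrow> (nat \<Rightarrow> real) \<Rightarrow> (nat \<Rightarrow> real) \<Rightarrow> real" where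
  "bil A x y = (\<Sum>i<6. \<Sum>j<6. x i * A i j * y j)"

text \<open>Row player plays x, column player plays y: row gets x\<cdot>Uy, column gets y\<cdot>Ux.\<close>
definition nash_eq :: "(nat \<Rightarrow> real) \<Rightarrow> (nat \<Rightarrow> real) \<Rightarrow> bool" where
  "nash_eq x y \<longleftrightarrow> x \<in> simplex6 \<and> y \<in> simplex6 \<and>
     (\<forall>x'\<in>simplex6. bil U x' y \<le> bil U x y) \<and>
     (\<forall>y'\<in>simplex6. bil U y' x \<le> bil U y x)"

definition n123 :: "nat \<Rightarrow> real" where
  "n123 i = (if i < 3 then 1/3 else 0)"

end

theory Submission
  imports Defs
begin

text \<open>A mixed strategy is a best reply exactly when it is supported on pure best replies, so an
  equilibrium \<open>(x, y)\<close> solves a linear complementarity system: for every \<open>i\<close>, either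
  \<open>x i = 0\<close> or row \<open>i\<close> is optimal against \<open>y\<close>, and symmetrically for \<open>y\<close>. Fixing which
  alternative holds at each of the twelve indices leaves a linear feasibility problem. All of them
  are infeasible unless both players avoid the strategies 4--6, and on the remaining cyclic block
  \<open>{1, 2, 3}\<close> (win 1, lose 3) the conditions force the uniform distribution.\<close>

lemma all_less_6: "(\<forall>i<6. P i) \<longleftrightarrow> P 0 \<and> P 1 \<and> P 2 \<and> P 3 \<and> P 4 \<and> P (5::nat)"
  by (simp add: numeral_eq_Suc All_less_Suc conj_ac)

lemma sum_less_6: "(\<Sum>i<6. f i) = f 0 + f 1 + f 2 + f 3 + f 4 + f 5" for f :: "nat \<Rightarrow> real"
  by (simp add: eval_nat_numeral)

definition row_payoff :: "(nat \<Rightarrow> nat \<Rightarrow> real) \<Rightarrow> (nat \<Rightarrow> real) \<Rightarrow> nat \<Rightarrow> real" where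
  "row_payoff A y i = (\<Sum>j<6. A i j * y j)"

definition pure_strategy :: "nat \<Rightarrow> nat \<Rightarrow> real" where
  "pure_strategy i k = (if k = i then 1 else 0)"

definition supported_on_best_replies ::
    "(nat \<Rightarrow> nat \<Rightarrow> real) \<Rightarrow> (nat \<Rightarrow> real) \<Rightarrow> (nat \<Rightarrow> real) \<Rightarrow> bool" where
  "supported_on_best_replies A x y \<longleftrightarrow>
     (\<forall>i<6. 0 < x i \<longrightarrow> (\<forall>j<6. row_payoff A y j \<le> row_payoff A y i))"

lemma bil_eq_sum_row_payoff: "bil A x y = (\<Sum>i<6. x i * row_payoff A y i)"
  unfolding bil_def row_payoff_def by (simp add: sum_distrib_left mult.assoc)

lemma pure_strategy_in_simplex6: "i < 6 \<Longrightarrow> pure_strategy i \<in> simplex6"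
  by (simp add: simplex6_def pure_strategy_def)

lemma bil_pure_strategy: "i < 6 \<Longrightarrow> bil A (pure_strategy i) y = row_payoff A y i"
  by (simp add: bil_eq_sum_row_payoff pure_strategy_def if_distrib[of "\<lambda>c. c * _"] cong: if_cong)

lemma bil_le_Max_row_payoff:
  assumes "x \<in> simplex6"
  shows "bil A x y \<le> Max (row_payoff A y ` {..<6})"
proof -
  let ?M = "Max (row_payoff A y ` {..<6})"
  have "bil A x y \<le> (\<Sum>i<6. x i * ?M)"
    unfolding bil_eq_sum_row_payoff
    using assms by (intro sum_mono mult_left_mono) (auto simp: simplex6_def)
  also have "\<dots> = ?M"
    using assms by (simp add: simplex6_def flip: sum_distrib_right)
  finally show ?thesis .
qed

lemma best_reply_iff_supported_on_best_replies:
  assumes x: "x \<in> simplex6"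
  shows "(\<forall>x'\<in>simplex6. bil A x' y \<le> bil A x y) \<longleftrightarrow> supported_on_best_replies A x y"
proof -
  define p where "p = row_payoff A y"
  define M where "M = Max (p ` {..<6})"
  have p_le_M: "p i \<le> M" if "i < 6" for i
    using that by (simp add: M_def)
  have "M \<in> p ` {..<6}"
    unfolding M_def by (rule Max_in) (auto simp: lessThan_empty_iff)
  then obtain i0 where i0: "i0 < 6" "p i0 = M"
    by auto
  have regret: "bil A x y = M - (\<Sum>i<6. x i * (M - p i))"
    using x by (simp add: bil_eq_sum_row_payoff p_def simplex6_def right_diff_distrib sum_subtractf
        flip: sum_distrib_right)
  have regret_nonneg: "0 \<le> x i * (M - p i)" if "i < 6" for i
    using x p_le_M that by (simp add: simplex6_def)
  show ?thesis
  proof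
    assume "\<forall>x'\<in>simplex6. bil A x' y \<le> bil A x y"
    then have "M \<le> bil A x y"
      using pure_strategy_in_simplex6 bil_pure_strategy i0 by (metis p_def)
    moreover have "0 \<le> (\<Sum>i<6. x i * (M - p i))"
      by (rule sum_nonneg) (simp add: regret_nonneg)
    ultimately have "(\<Sum>i<6. x i * (M - p i)) = 0"
      using regret by linarith
    then have "x i * (M - p i) = 0" if "i < 6" for i
      using that regret_nonneg sum_nonneg_eq_0_iff[of "{..<6}" "\<lambda>i. x i * (M - p i)"] by simp
    then show "supported_on_best_replies A x y"
      using p_le_M by (fastforce simp: supported_on_best_replies_def p_def)
  next
    assume supported: "supported_on_best_replies A x y"
    have "x i * (M - p i) = 0" if "i < 6" for i
    proof (cases "x i = 0")
      case False
      with x that have "0 < x i"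
        by (simp add: simplex6_def order_less_le)
      with supported that i0 have "M \<le> p i"
        by (auto simp: supported_on_best_replies_def p_def)
      with p_le_M[OF that] show ?thesis
        by simp
    qed simp
    then have "bil A x y = M"
      unfolding regret by (simp add: sum.neutral)
    then show "\<forall>x'\<in>simplex6. bil A x' y \<le> bil A x y"
      using bil_le_Max_row_payoff by (simp add: M_def p_def)
  qed
qed

lemma nash_eq_iff:
  "nash_eq x y \<longleftrightarrow> x \<in> simplex6 \<and> y \<in> simplex6 \<and>
     supported_on_best_replies U x y \<and> supported_on_best_replies U y x"
  unfolding nash_eq_def using best_reply_iff_supported_on_best_replies by blast

lemma nash_eq_swap: "nash_eq x y \<Longrightarrow> nash_eq y x"
  by (simp add: nash_eq_def)

lemma row_payoff_U:
  "row_payoff U y 0 = - 3 * y 1 + y 2 - y 3 - y 4 - y 5"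
  "row_payoff U y 1 = y 0 - 3 * y 2 - y 3 - y 4 - y 5"
  "row_payoff U y 2 = - 3 * y 0 + y 1 - y 3 - y 4 - y 5"
  "row_payoff U y 3 = - 4 * y 0 - 4 * y 1 + 3 * y 2 - 5 * y 4 + y 5"
  "row_payoff U y 4 = - y 0 - y 1 - 3 * y 2 + y 3 - 5 * y 5"
  "row_payoff U y 5 = - y 0 - y 1 - 3 * y 2 - 5 * y 3 + y 4"
  by (simp_all add: row_payoff_def sum_less_6 U_def)

lemma row_payoff_U_n123:
  assumes "i < 6"
  shows "row_payoff U n123 i = (if i < 3 then - 2/3 else - 5/3)"
proof -
  from assms have "i = 0 \<or> i = 1 \<or> i = 2 \<or> i = 3 \<or> i = 4 \<or> i = 5"
    by auto
  then show ?thesis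
    by (elim disjE) (simp_all add: row_payoff_def sum_less_6 U_def n123_def)
qed

lemma nash_eq_n123: "nash_eq n123 n123"
proof -
  have "n123 \<in> simplex6"
    by (simp add: simplex6_def sum_less_6 n123_def)
  moreover have "supported_on_best_replies U n123 n123"
    by (simp add: supported_on_best_replies_def row_payoff_U_n123 n123_def)
  ultimately show ?thesis
    by (simp add: nash_eq_iff)
qed

lemma nash_eq_supported_on_first_three:
  assumes "nash_eq x y"
  shows "x 3 = 0 \<and> x 4 = 0 \<and> x 5 = 0"
  using assms
  unfolding nash_eq_iff simplex6_def mem_Collect_eq supported_on_best_replies_def all_less_6
    sum_less_6 row_payoff_U
  by (smt (z3))

lemma nash_eq_row_strategy_eq_n123:
  assumes "nash_eq x y"
  shows "\<forall>i<6. x i = n123 i"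
proof -
  have "x 3 = 0 \<and> x 4 = 0 \<and> x 5 = 0" "y 3 = 0 \<and> y 4 = 0 \<and> y 5 = 0"
    using assms nash_eq_swap nash_eq_supported_on_first_three by blast+
  with assms have "3 * x 0 = 1 \<and> 3 * x 1 = 1 \<and> 3 * x 2 = 1"
    unfolding nash_eq_iff simplex6_def mem_Collect_eq supported_on_best_replies_def all_less_6
      sum_less_6 row_payoff_U
    by (smt (z3))
  then show ?thesis
    using \<open>x 3 = 0 \<and> x 4 = 0 \<and> x 5 = 0\<close> by (simp add: all_less_6 n123_def)
qed

theorem proposition3:
  "nash_eq n123 n123 \<and>
   (\<forall>x y. nash_eq x y \<longrightarrow> (\<forall>i<6. x i = n123 i \<and> y i = n123 i))"
  using nash_eq_n123 nash_eq_row_strategy_eq_n123 nash_eq_swap by blast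

end
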